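(* Let $\mathfrak{g}$ be a finite-dimensional semisimple Lie algebra over an algebraically closed field of characteristic $0$, with root system $R$ and base $\Pi$. Let $S\subset\Pi$ and $n=\operatorname{card}\mathcal{K}(S)$. There exist subsets $S_1,\dots,S_n$ of $\Pi$ such that: (i) $S_1\subset S_2\subset\cdots\subset S_n=S$; (ii) $\mathcal{K}(S_1)\subset\mathcal{K}(S_2)\subset\cdots\subset\mathcal{K}(S_n)$; (iii) $\operatorname{card}\mathcal{K}(S_i)=i$ for $1\leqslant i\leqslant n$.
   Context: For $S\subset\Pi$, $R^S=R\cap\mathbb{Z}S$. For $\alpha\in R$, $H_\alpha$ is the coroot ($\alpha(H_\alpha)=2$, $H_\alpha\in[\mathfrak{g}^\alpha,\mathfrak{g}^{-\alpha}]$) and $\langle\lambda,\alpha^\vee\rangle=\lambda(H_\alpha)$. For connected $S\subset\Pi$ (in the Dynkin diagram), $\varepsilon_S$ is the highest root of the irreducible root system $R^S$ w.r.t. the base $S$. The set $\mathcal{K}(S)$ of subsets of $S$ is defined by induction on $\operatorname{card}S$: $\mathcal{K}(\emptyset)=\emptyset$; if $S_1,\dots,S_r$ are the connected components of $S$, $\mathcal{K}(S)=\mathcal{K}(S_1)\cup\dots\cup\mathcal{K}(S_r)$; if $S$ is connected, $\mathcal{K}(S)=\{S\}\cup\mathcal{K}(\{\alpha\in S:\langle\alpha,\varepsilon_S^\vee\rangle=0\})$. *)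

theory Defs
  imports "HOL-Analysis.Analysis"
begin

text \<open>The root system R of a semisimple Lie algebra over an algebraically closed field
  of characteristic 0 is (up to isomorphism) exactly such a root system, realised in
  the real form of the dual of a Cartan subalgebra.\<close>

definition coroot_pair :: "'a::euclidean_space \<Rightarrow> 'a \<Rightarrow> real" where
  "coroot_pair x \<alpha> = 2 * (x \<bullet> \<alpha>) / (\<alpha> \<bullet> \<alpha>)"

definition reflection :: "'a::euclidean_space \<Rightarrow> 'a \<Rightarrow> 'a" where
  "reflection \<alpha> x = x - coroot_pair x \<alpha> *\<^sub>R \<alpha>"

definition root_system :: "'a::euclidean_space set \<Rightarrow> bool" where
  "root_system R \<longleftrightarrow> finite R \<and> 0 \<notin> R \<and> span R = UNIV
     \<and> (\<forall>\<alpha>\<in>R. \<forall>\<beta>\<in>R. reflection \<alpha> \<beta> \<in> R)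
     \<and> (\<forall>\<alpha>\<in>R. \<forall>\<beta>\<in>R. coroot_pair \<beta> \<alpha> \<in> \<int>)
     \<and> (\<forall>\<alpha>\<in>R. \<forall>c. c *\<^sub>R \<alpha> \<in> R \<longrightarrow> c = 1 \<or> c = -1)"

definition int_span :: "'a::euclidean_space set \<Rightarrow> 'a set" where
  "int_span S = {(\<Sum>\<alpha>\<in>S. of_int (c \<alpha>) *\<^sub>R \<alpha>) | c. True}"

definition nonneg_int_span :: "'a::euclidean_space set \<Rightarrow> 'a set" where
  "nonneg_int_span S = {(\<Sum>\<alpha>\<in>S. of_int (c \<alpha>) *\<^sub>R \<alpha>) | c. \<forall>\<alpha>\<in>S. c \<alpha> \<ge> 0}"

definition is_base :: "'a::euclidean_space set \<Rightarrow> 'a set \<Rightarrow> bool" where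
  "is_base R B \<longleftrightarrow> B \<subseteq> R \<and> independent B
     \<and> (\<forall>\<beta>\<in>R. \<beta> \<in> nonneg_int_span B \<or> - \<beta> \<in> nonneg_int_span B)"

definition sub_roots :: "'a::euclidean_space set \<Rightarrow> 'a set \<Rightarrow> 'a set" where
  "sub_roots R S = R \<inter> int_span S"

text \<open>Connectedness in the Dynkin diagram (two simple roots are joined iff they are
  distinct and not orthogonal).\<close>
definition dynkin_connected :: "'a::euclidean_space set \<Rightarrow> bool" where
  "dynkin_connected S \<longleftrightarrow> S \<noteq> {} \<and>
     (\<forall>A. A \<subseteq> S \<and> A \<noteq> {} \<and> A \<noteq> S \<longrightarrow> (\<exists>\<alpha>\<in>A. \<exists>\<beta>\<in>S - A. \<alpha> \<bullet> \<beta> \<noteq> 0))"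

definition dynkin_components :: "'a::euclidean_space set \<Rightarrow> 'a set set" where
  "dynkin_components S = {C. C \<subseteq> S \<and> dynkin_connected C \<and>
     (\<forall>D. C \<subseteq> D \<and> D \<subseteq> S \<and> dynkin_connected D \<longrightarrow> D = C)}"

definition highest_root :: "'a::euclidean_space set \<Rightarrow> 'a set \<Rightarrow> 'a" where
  "highest_root R S = (THE \<epsilon>. \<epsilon> \<in> sub_roots R S \<and>
     (\<forall>\<beta>\<in>sub_roots R S. \<epsilon> - \<beta> \<in> nonneg_int_span S))"

inductive inK :: "'a::euclidean_space set \<Rightarrow> 'a set \<Rightarrow> 'a set \<Rightarrow> bool" for R where
  self: "dynkin_connected S \<Longrightarrow> inK R S S"
| conn: "dynkin_connected S \<Longrightarrow>
           inK R {\<alpha>\<in>S. coroot_pair \<alpha> (highest_root R S) = 0} T \<Longrightarrow> inK R S T"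
| comp: "\<not> dynkin_connected S \<Longrightarrow> C \<in> dynkin_components S \<Longrightarrow> inK R C T \<Longrightarrow> inK R S T"

definition Kset :: "'a::euclidean_space set \<Rightarrow> 'a set \<Rightarrow> 'a set set" where
  "Kset R S = {T. inK R S T}"

end

theory Submission
  imports Defs
begin

text \<open>If S is connected, K(S) is K(S') together with S itself, where S' is the part of S
  orthogonal to the highest root; if S is disconnected, splitting it into two mutually
  orthogonal pieces A and X splits K(S) into the disjoint union of K(A) and K(X). Hence every
  nonempty S has a subset T with K(T) equal to K(S) minus a single element (drop S itself, or
  recurse into X and keep all of A), and iterating this step from S downwards yields the chain.\<close>

lemma dynkin_connected_nonempty: "dynkin_connected S \<Longrightarrow> S \<noteq> {}"
  by (simp add: dynkin_connected_def)

lemma inK_subset_connected: "inK R S T \<Longrightarrow> T \<subseteq> S \<and> dynkin_connected T"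
  by (induction rule: inK.induct) (auto simp: dynkin_components_def)

lemma Kset_member_subset: "T \<in> Kset R S \<Longrightarrow> T \<subseteq> S"
  unfolding Kset_def using inK_subset_connected by blast

lemma Kset_member_nonempty: "T \<in> Kset R S \<Longrightarrow> T \<noteq> {}"
  unfolding Kset_def using inK_subset_connected dynkin_connected_nonempty by blast

lemma Kset_empty: "Kset R {} = {}"
  using Kset_member_subset Kset_member_nonempty by blast

lemma finite_Kset: "finite S \<Longrightarrow> finite (Kset R S)"
  by (rule finite_subset[of _ "Pow S"]) (auto dest: Kset_member_subset)

lemma dynkin_connected_singleton: "dynkin_connected {\<alpha>}"
  unfolding dynkin_connected_def by auto

lemma not_dynkin_connected_orthogonal_split:
  assumes "\<not> dynkin_connected S" "S \<noteq> {}"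
  obtains A X where "S = A \<union> X" "A \<inter> X = {}" "A \<noteq> {}" "X \<noteq> {}"
    "\<forall>\<alpha>\<in>A. \<forall>\<beta>\<in>X. \<alpha> \<bullet> \<beta> = 0"
proof -
  obtain A where "A \<subseteq> S" "A \<noteq> {}" "A \<noteq> S" "\<forall>\<alpha>\<in>A. \<forall>\<beta>\<in>S - A. \<alpha> \<bullet> \<beta> = 0"
    using assms unfolding dynkin_connected_def by blast
  then show thesis
    by (intro that[of A "S - A"]) auto
qed

lemma dynkin_components_connected: "dynkin_connected S \<Longrightarrow> dynkin_components S = {S}"
  unfolding dynkin_components_def by auto

lemma Kset_connected:
  "dynkin_connected S \<Longrightarrow>
     Kset R S = insert S (Kset R {\<alpha>\<in>S. coroot_pair \<alpha> (highest_root R S) = 0})"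
  unfolding Kset_def by (auto intro: inK.intros elim: inK.cases)

text \<open>For a genuine highest root S' is a proper subset of a connected S, but the definition
  of K does not know this, so the degenerate case has to be covered as well.\<close>

lemma Kset_connected_no_orthogonal_part:
  assumes "dynkin_connected S" "{\<alpha>\<in>S. coroot_pair \<alpha> (highest_root R S) = 0} = S"
  shows "Kset R S = {S}"
proof -
  have "T = S" if "inK R S T" for T
    using that assms by (induction rule: inK.induct) auto
  then show ?thesis
    using Kset_connected[OF assms(1)] unfolding Kset_def by auto
qed

lemma Kset_eq_UN_components: "Kset R S = (\<Union>C\<in>dynkin_components S. Kset R C)"
proof (cases "dynkin_connected S")
  case True
  then show ?thesis by (simp add: dynkin_components_connected)
next
  case False
  then show ?thesis unfolding Kset_def by (auto intro: inK.comp elim: inK.cases)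
qed

lemma dynkin_connected_subset_orthogonal_Un:
  assumes "\<forall>\<alpha>\<in>A. \<forall>\<beta>\<in>X. \<alpha> \<bullet> \<beta> = 0" "T \<subseteq> A \<union> X" "dynkin_connected T"
  shows "T \<subseteq> A \<or> T \<subseteq> X"
proof (rule ccontr)
  assume "\<not> ?thesis"
  then have "T \<inter> A \<noteq> {}" "T \<inter> A \<noteq> T" using assms(2) by auto
  then obtain \<alpha> \<beta> where "\<alpha> \<in> T \<inter> A" "\<beta> \<in> T - T \<inter> A" "\<alpha> \<bullet> \<beta> \<noteq> 0"
    using assms(3) unfolding dynkin_connected_def by (metis inf_le1)
  then show False using assms(1,2) by auto
qed

lemma dynkin_components_orthogonal_Un:
  assumes "A \<inter> X = {}" "\<forall>\<alpha>\<in>A. \<forall>\<beta>\<in>X. \<alpha> \<bullet> \<beta> = 0"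
  shows "dynkin_components (A \<union> X) = dynkin_components A \<union> dynkin_components X"
proof -
  let ?maximal_in = "\<lambda>C S. \<forall>D. C \<subseteq> D \<and> D \<subseteq> S \<and> dynkin_connected D \<longrightarrow> D = C"
  have split: "T \<subseteq> A \<or> T \<subseteq> X" if "T \<subseteq> A \<union> X" "dynkin_connected T" for T
    using dynkin_connected_subset_orthogonal_Un[OF assms(2) that] .
  have maximal_A: "?maximal_in C (A \<union> X) \<longleftrightarrow> ?maximal_in C A" if "C \<subseteq> A" "C \<noteq> {}" for C
  proof -
    have "C \<subseteq> D \<and> D \<subseteq> A \<union> X \<and> dynkin_connected D \<longleftrightarrow> C \<subseteq> D \<and> D \<subseteq> A \<and> dynkin_connected D" for D
      using split[of D] that assms(1) by blast
    then show ?thesis by presburger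
  qed
  have maximal_X: "?maximal_in C (A \<union> X) \<longleftrightarrow> ?maximal_in C X" if "C \<subseteq> X" "C \<noteq> {}" for C
  proof -
    have "C \<subseteq> D \<and> D \<subseteq> A \<union> X \<and> dynkin_connected D \<longleftrightarrow> C \<subseteq> D \<and> D \<subseteq> X \<and> dynkin_connected D" for D
      using split[of D] that assms(1) by blast
    then show ?thesis by presburger
  qed
  show ?thesis
  proof (rule set_eqI)
    fix C
    consider "C \<subseteq> A" "C \<noteq> {}" | "C \<subseteq> X" "C \<noteq> {}" | "\<not> (C \<subseteq> A \<union> X \<and> dynkin_connected C)"
      using split dynkin_connected_nonempty by blast
    then show "C \<in> dynkin_components (A \<union> X) \<longleftrightarrow> C \<in> dynkin_components A \<union> dynkin_components X"
    proof cases
      case 1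
      then have "\<not> C \<subseteq> X" using assms(1) by blast
      with 1 maximal_A[OF 1] show ?thesis by (auto simp: dynkin_components_def)
    next
      case 2
      then have "\<not> C \<subseteq> A" using assms(1) by blast
      with 2 maximal_X[OF 2] show ?thesis by (auto simp: dynkin_components_def)
    next
      case 3
      then show ?thesis by (auto simp: dynkin_components_def)
    qed
  qed
qed

lemma Kset_orthogonal_Un:
  assumes "A \<inter> X = {}" "\<forall>\<alpha>\<in>A. \<forall>\<beta>\<in>X. \<alpha> \<bullet> \<beta> = 0"
  shows "Kset R (A \<union> X) = Kset R A \<union> Kset R X"
  by (subst (1 2 3) Kset_eq_UN_components) (simp add: dynkin_components_orthogonal_Un[OF assms])

lemma card_Kset_orthogonal_Un:
  assumes "finite A" "finite X" "A \<inter> X = {}" "\<forall>\<alpha>\<in>A. \<forall>\<beta>\<in>X. \<alpha> \<bullet> \<beta> = 0"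
  shows "card (Kset R (A \<union> X)) = card (Kset R A) + card (Kset R X)"
proof -
  have "Kset R A \<inter> Kset R X = {}"
    using Kset_member_subset Kset_member_nonempty assms(3) by blast
  then show ?thesis
    by (simp add: Kset_orthogonal_Un[OF assms(3,4)] card_Un_disjoint finite_Kset assms(1,2))
qed

lemma Kset_nonempty:
  assumes "finite S" "S \<noteq> {}"
  shows "Kset R S \<noteq> {}"
proof -
  obtain \<alpha> where "\<alpha> \<in> S" using assms(2) by blast
  let ?connected_subsets = "{C. C \<subseteq> S \<and> dynkin_connected C}"
  have "finite ?connected_subsets" "{\<alpha>} \<in> ?connected_subsets"
    using assms(1) \<open>\<alpha> \<in> S\<close> dynkin_connected_singleton by auto
  from finite_has_maximal2[OF this] obtain C
    where "C \<in> ?connected_subsets" "\<forall>D\<in>?connected_subsets. C \<subseteq> D \<longrightarrow> C = D"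
    by blast
  then have "C \<in> dynkin_components S"
    unfolding dynkin_components_def by auto
  moreover have "C \<in> Kset R C"
    using calculation unfolding dynkin_components_def Kset_def by (auto intro: inK.self)
  ultimately show ?thesis
    using Kset_eq_UN_components[of R S] by blast
qed

lemma Kset_remove_one:
  assumes "finite S" "Kset R S \<noteq> {}"
  shows "\<exists>T\<subseteq>S. Kset R T \<subseteq> Kset R S \<and> Suc (card (Kset R T)) = card (Kset R S)"
  using assms
proof (induction "card S" arbitrary: S rule: less_induct)
  case less
  show ?case
  proof (cases "dynkin_connected S")
    case connected: True
    define S' where "S' = {\<alpha>\<in>S. coroot_pair \<alpha> (highest_root R S) = 0}"
    show ?thesis
    proof (cases "S' = S")
      case True
      then have "Kset R S = {S}"
        using Kset_connected_no_orthogonal_part[OF connected] S'_def by simp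
      then show ?thesis
        by (intro exI[of _ "{}"]) (simp add: Kset_empty)
    next
      case False
      have "S' \<subseteq> S" "S \<notin> Kset R S'"
        using Kset_member_subset False S'_def by blast+
      moreover have "finite (Kset R S')"
        using finite_Kset less.prems(1) \<open>S' \<subseteq> S\<close> finite_subset by blast
      moreover have "Kset R S = insert S (Kset R S')"
        using Kset_connected[OF connected] S'_def by simp
      ultimately show ?thesis
        by (intro exI[of _ S']) auto
    qed
  next
    case False
    moreover have "S \<noteq> {}"
      using less.prems(2) Kset_empty by blast
    ultimately obtain A X where split: "S = A \<union> X" "A \<inter> X = {}" "A \<noteq> {}" "X \<noteq> {}"
      and orthogonal: "\<forall>\<alpha>\<in>A. \<forall>\<beta>\<in>X. \<alpha> \<bullet> \<beta> = 0"
      by (rule not_dynkin_connected_orthogonal_split)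
    have finite: "finite A" "finite X"
      using less.prems(1) split(1) by auto
    have "card X < card S"
      using split less.prems(1) by (auto intro: psubset_card_mono)
    then obtain T where T: "T \<subseteq> X" "Kset R T \<subseteq> Kset R X" "Suc (card (Kset R T)) = card (Kset R X)"
      using less.hyps[OF _ finite(2) Kset_nonempty[OF finite(2) split(4)]] by blast
    have orthogonal_T: "\<forall>\<alpha>\<in>A. \<forall>\<beta>\<in>T. \<alpha> \<bullet> \<beta> = 0" "A \<inter> T = {}"
      using orthogonal split(2) T(1) by blast+
    have "finite T"
      using T(1) finite(2) finite_subset by blast
    show ?thesis
    proof (intro exI[of _ "A \<union> T"] conjI)
      show "A \<union> T \<subseteq> S"
        using T(1) split(1) by blast
      show "Kset R (A \<union> T) \<subseteq> Kset R S"
        using T(2) split(1) Kset_orthogonal_Un[OF orthogonal_T(2,1)] Kset_orthogonal_Un[OF split(2) orthogonal]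
        by blast
      show "Suc (card (Kset R (A \<union> T))) = card (Kset R S)"
        using T(3) split(1) card_Kset_orthogonal_Un[OF finite(1) \<open>finite T\<close> orthogonal_T(2,1)]
          card_Kset_orthogonal_Un[OF finite split(2) orthogonal] by simp
    qed
  qed
qed

definition Kset_chain :: "'a::euclidean_space set \<Rightarrow> 'a set \<Rightarrow> nat \<Rightarrow> (nat \<Rightarrow> 'a set) \<Rightarrow> bool" where
  "Kset_chain R S n Ss \<longleftrightarrow>
       (\<forall>i\<in>{1..n}. Ss i \<subseteq> S)
     \<and> (\<forall>i. 1 \<le> i \<and> i < n \<longrightarrow> Ss i \<subseteq> Ss (Suc i))
     \<and> (n \<ge> 1 \<longrightarrow> Ss n = S)
     \<and> (\<forall>i. 1 \<le> i \<and> i < n \<longrightarrow> Kset R (Ss i) \<subseteq> Kset R (Ss (Suc i)))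
     \<and> (\<forall>i\<in>{1..n}. card (Kset R (Ss i)) = i)"

lemma Kset_chain_extend:
  assumes "Kset_chain R T m Ss" "T \<subseteq> S" "Kset R T \<subseteq> Kset R S" "card (Kset R S) = Suc m"
  shows "Kset_chain R S (Suc m) (Ss(Suc m := S))"
proof -
  note chain = assms(1)[unfolded Kset_chain_def]
  have below_T: "Ss i \<subseteq> T" if "i \<in> {1..m}" for i
    using chain that by blast
  have last_step: "i < m \<or> i = m \<and> Ss m = T" if "1 \<le> i \<and> i < Suc m" for i
    using that chain by auto
  show ?thesis
    unfolding Kset_chain_def
  proof (intro conjI allI ballI impI)
    fix i assume "i \<in> {1..Suc m}"
    then show "(Ss(Suc m := S)) i \<subseteq> S"
      using below_T[of i] assms(2) by (cases "i = Suc m") auto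
  next
    fix i assume "1 \<le> i \<and> i < Suc m"
    then show "(Ss(Suc m := S)) i \<subseteq> (Ss(Suc m := S)) (Suc i)"
      using last_step[of i] chain assms(2) by auto
  next
    fix i assume "1 \<le> i \<and> i < Suc m"
    then show "Kset R ((Ss(Suc m := S)) i) \<subseteq> Kset R ((Ss(Suc m := S)) (Suc i))"
      using last_step[of i] chain assms(3) by auto
  next
    fix i assume "i \<in> {1..Suc m}"
    then show "card (Kset R ((Ss(Suc m := S)) i)) = i"
      using chain assms(4) by (cases "i = Suc m") auto
  qed simp
qed

lemma Kset_chain_exists:
  assumes "finite S"
  shows "\<exists>Ss. Kset_chain R S (card (Kset R S)) Ss"
  using assms
proof (induction "card (Kset R S)" arbitrary: S)
  case 0
  then show ?case by (simp add: Kset_chain_def)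
next
  case (Suc m)
  then obtain T where T: "T \<subseteq> S" "Kset R T \<subseteq> Kset R S" "Suc (card (Kset R T)) = card (Kset R S)"
    using Kset_remove_one[of S R] by force
  moreover have "finite T" "m = card (Kset R T)"
    using T Suc.prems Suc.hyps(2) finite_subset by auto
  ultimately obtain Ss where "Kset_chain R T m Ss"
    using Suc.hyps(1) by blast
  then show ?case
    using Kset_chain_extend T Suc.hyps(2) by metis
qed

theorem lemma5p1:
  fixes R B S :: "'a::euclidean_space set"
  assumes "root_system R" and "is_base R B" and "S \<subseteq> B"
  shows "\<exists>Ss :: nat \<Rightarrow> 'a set.
           (\<forall>i\<in>{1..card (Kset R S)}. Ss i \<subseteq> B)
         \<and> (\<forall>i. 1 \<le> i \<and> i < card (Kset R S) \<longrightarrow> Ss i \<subseteq> Ss (Suc i))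
         \<and> (card (Kset R S) \<ge> 1 \<longrightarrow> Ss (card (Kset R S)) = S)
         \<and> (\<forall>i. 1 \<le> i \<and> i < card (Kset R S) \<longrightarrow> Kset R (Ss i) \<subseteq> Kset R (Ss (Suc i)))
         \<and> (\<forall>i\<in>{1..card (Kset R S)}. card (Kset R (Ss i)) = i)"
proof -
  have "finite S"
    using assms finite_subset unfolding root_system_def is_base_def by metis
  then obtain Ss where "Kset_chain R S (card (Kset R S)) Ss"
    using Kset_chain_exists by blast
  then show ?thesis
    using assms(3) unfolding Kset_chain_def by (intro exI[of _ Ss]) blast
qed

end
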